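(* Let $\mathcal{U}_i$ be a finite set, $D_i$ a probability distribution on $\mathcal{U}_i$, and $\bm{z}_i\in[0,1]^{\mathcal{U}_i}$ with $z_e\le D_i(e)$ for all $e\in\mathcal{U}_i$. Let $R\sim\bm{z}_i$ denote the random subset of $\mathcal{U}_i$ containing each $e$ independently with probability $z_e$. Consider the random set $T_i\subseteq\mathcal{U}_i$ produced as follows: draw $X_i\sim D_i$ with realization $e$; with probability $\Pr_{R\sim\bm{z}_i}[R=\{e\}]/D_i(e)$ set $T_i=\{e\}$; otherwise set $T_i$ to an (independent) random set drawn from $\bm{z}_i$ conditioned on $|R|\ne1$. Then for every $S\subseteq\mathcal{U}_i$, \[\Pr[T_i=S]=\Pr_{R\sim\bm{z}_i}[R=S].\]
   Context: Note $\Pr_{R\sim\bm{z}_i}[R=S]=\prod_{e\in S}z_e\prod_{e\in\mathcal{U}_i\setminus S}(1-z_e)$; the hypothesis $z_e\le D_i(e)$ ensures the probability $\Pr[R=\{e\}]/D_i(e)$ is at most $1$ (for realized $e$, $D_i(e)>0$). The conditioned draw is only needed in the "otherwise" branch. *)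

theory Defs
  imports "HOL-Probability.Probability"
begin

definition zdist :: "'a set \<Rightarrow> ('a \<Rightarrow> real) \<Rightarrow> 'a set pmf" where
  "zdist U z = map_pmf (\<lambda>f. {e \<in> U. f e}) (Pi_pmf U False (\<lambda>e. bernoulli_pmf (z e)))"

definition T_dist :: "'a set \<Rightarrow> 'a pmf \<Rightarrow> ('a \<Rightarrow> real) \<Rightarrow> 'a set pmf" where
  "T_dist U D z =
     bind_pmf D (\<lambda>e.
       bind_pmf (bernoulli_pmf (pmf (zdist U z) {e} / pmf D e)) (\<lambda>b.
         if b then return_pmf {e}
         else cond_pmf (zdist U z) {S. card S \<noteq> 1}))"

end

theory Submission
  imports Defs
begin

text \<open>
  The sampler is an accept/resample scheme. Outcome \<open>{e}\<close> is accepted with overall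
  probability \<open>D(e) \<cdot> Pr[R = {e}] / D(e) = Pr[R = {e}]\<close>, so the singletons get exactly their
  mass under the product distribution. The rejected mass is
  \<open>1 - \<Sum>\<^sub>e Pr[R = {e}] = Pr[|R| \<noteq> 1]\<close>, and it is spent on \<open>R\<close> conditioned on
  \<open>|R| \<noteq> 1\<close>, which reproduces the product distribution on all other sets. Nothing here
  depends on sets or products: any distribution \<open>P\<close> whose mass on the image of an injection
  \<open>f\<close> is dominated by \<open>D\<close> is recovered in the same way.
\<close>

definition accept_or_resample :: "'b pmf \<Rightarrow> 'a pmf \<Rightarrow> ('a \<Rightarrow> 'b) \<Rightarrow> 'b pmf" where
  "accept_or_resample P D f =
     bind_pmf D (\<lambda>e.
       bind_pmf (bernoulli_pmf (pmf P (f e) / pmf D e)) (\<lambda>b.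
         if b then return_pmf (f e) else cond_pmf P (- range f)))"

lemma pmf_bind_bernoulli_if:
  assumes "0 \<le> p" "p \<le> 1"
  shows "pmf (bind_pmf (bernoulli_pmf p) (\<lambda>b. if b then A else B)) x = p * pmf A x + (1 - p) * pmf B x"
  using assms by (simp add: pmf_bind)

lemma measure_mult_pmf_cond_pmf:
  "measure_pmf.prob p s * pmf (cond_pmf p s) x = (if x \<in> s then pmf p x else 0)"
proof (cases "set_pmf p \<inter> s = {}")
  case True
  then have "measure_pmf.prob p s = 0" and "x \<in> s \<Longrightarrow> pmf p x = 0"
    by (auto simp: measure_pmf_zero_iff set_pmf_iff)
  then show ?thesis by simp
next
  case False
  then have "measure_pmf.prob p s \<noteq> 0" by (simp add: measure_pmf_zero_iff)
  then show ?thesis by (simp add: pmf_cond[OF False])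
qed

lemma integral_measure_pmf_count_space:
  fixes h :: "'a \<Rightarrow> real"
  shows "measure_pmf.expectation D h = (\<integral>e. pmf D e * h e \<partial>count_space UNIV)"
  by (simp add: measure_pmf_eq_density integral_density)

lemma integrable_measure_pmf_bounded:
  fixes h :: "'a \<Rightarrow> real"
  assumes "\<And>x. \<bar>h x\<bar> \<le> B"
  shows "integrable (measure_pmf D) h"
  using assms by (intro measure_pmf.integrable_const_bound[where B=B]) auto

lemma measure_pmf_compl: "measure_pmf.prob p (- A) = 1 - measure_pmf.prob p A"
  using measure_pmf.prob_compl[of A p] by (simp add: Compl_eq_Diff_UNIV)

lemma accept_or_resample_eq:
  assumes "inj f" and dominated: "\<And>e. pmf P (f e) \<le> pmf D e"
  shows "accept_or_resample P D f = P"
proof (rule pmf_eqI)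
  fix x
  define q where "q e = pmf P (f e) / pmf D e" for e
  define C where "C = cond_pmf P (- range f)"
  \<comment> \<open>If \<open>pmf D e = 0\<close> then the junk value \<open>q e = 0\<close> is harmless: domination forces \<open>pmf P (f e) = 0\<close>.\<close>
  have q_weight: "pmf D e * q e = pmf P (f e)" for e
  proof (cases "pmf D e = 0")
    case True
    then show ?thesis using dominated[of e] pmf_nonneg[of P "f e"] by simp
  qed (simp add: q_def)
  have q_bounds: "0 \<le> q e" "q e \<le> 1" for e
    using dominated[of e] pmf_nonneg[of D e] by (auto simp: q_def divide_le_eq_1)
  have q_integrable: "integrable D q"
    using q_bounds by (intro integrable_measure_pmf_bounded[where B=1]) auto
  have "pmf (accept_or_resample P D f) x = (\<integral>e. q e * of_bool (f e = x) + (1 - q e) * pmf C x \<partial>D)"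
    unfolding accept_or_resample_def pmf_bind[of D] q_def[symmetric] C_def[symmetric]
    using q_bounds by (simp add: pmf_bind_bernoulli_if indicator_def)
  also have "\<dots> = (\<integral>e. q e * of_bool (f e = x) \<partial>D) + (1 - (\<integral>e. q e \<partial>D)) * pmf C x"
  proof -
    have "integrable D (\<lambda>e. q e * of_bool (f e = x))"
      using q_bounds by (intro integrable_measure_pmf_bounded[where B=1]) auto
    then show ?thesis
      using q_integrable by (simp add: integral_add integral_diff)
  qed
  also have "(\<integral>e. q e * of_bool (f e = x) \<partial>D) = of_bool (x \<in> range f) * pmf P x"
  proof (cases "x \<in> range f")
    case True
    then obtain a where a: "x = f a" by blast
    have "(\<integral>e. q e * of_bool (f e = x) \<partial>D) = (\<Sum>e\<in>{a}. q e * of_bool (f e = x) * pmf D e)"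
      using \<open>inj f\<close> a by (intro integral_measure_pmf_real) (auto dest: injD)
    then show ?thesis using a q_weight[of a] True by (simp add: mult.commute)
  next
    case False
    then have "f e \<noteq> x" for e by auto
    then show ?thesis using False by simp
  qed
  also have "(\<integral>e. q e \<partial>D) = measure_pmf.prob P (range f)"
  proof -
    have "(\<integral>e. q e \<partial>D) = (\<integral>e. pmf P (f e) \<partial>count_space UNIV)"
      by (simp add: integral_measure_pmf_count_space q_weight)
    also have "\<dots> = (\<integral>y. pmf P y \<partial>count_space (range f))"
      using \<open>inj f\<close> by (intro integral_bij_count_space) (simp add: bij_betw_def)
    finally show ?thesis by (simp add: integral_pmf)
  qed
  also have "(1 - measure_pmf.prob P (range f)) * pmf C x = (if x \<in> - range f then pmf P x else 0)"
    unfolding C_def measure_pmf_compl[symmetric] by (rule measure_mult_pmf_cond_pmf)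
  finally show "pmf (accept_or_resample P D f) x = pmf P x"
    by auto
qed

lemma set_pmf_zdist: "set_pmf (zdist U z) \<subseteq> Pow U"
  unfolding zdist_def by auto

lemma measure_zdist_mem:
  assumes "finite U" "e \<in> U" "0 \<le> z e" "z e \<le> 1"
  shows "measure_pmf.prob (zdist U z) {R. e \<in> R} = z e"
proof -
  let ?Pi = "Pi_pmf U False (\<lambda>e. bernoulli_pmf (z e))"
  have "measure_pmf.prob (zdist U z) {R. e \<in> R} = measure_pmf.prob (map_pmf (\<lambda>f. f e) ?Pi) {True}"
    unfolding zdist_def measure_map_pmf using assms(2)
    by (intro arg_cong[where f="measure_pmf.prob ?Pi"]) auto
  then show ?thesis
    using Pi_pmf_component[OF assms(1), of e False] assms by (simp add: measure_pmf_single)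
qed

lemma pmf_zdist_singleton_le:
  assumes "finite U" "e \<in> U" "0 \<le> z e" "z e \<le> 1"
  shows "pmf (zdist U z) {e} \<le> z e"
proof -
  have "pmf (zdist U z) {e} \<le> measure_pmf.prob (zdist U z) {R. e \<in> R}"
    unfolding measure_pmf_single[symmetric] by (intro measure_pmf.finite_measure_mono) auto
  then show ?thesis using measure_zdist_mem[of U e z] assms by simp
qed

lemma range_singleton_eq_card_1: "range (\<lambda>e. {e}) = {S. card S = 1}"
  by (auto simp: card_1_singleton_iff)

lemma T_dist_eq_accept_or_resample: "T_dist U D z = accept_or_resample (zdist U z) D (\<lambda>e. {e})"
proof -
  have "- range (\<lambda>e. {e}) = {S :: 'a set. card S \<noteq> 1}"
    by (auto simp: range_singleton_eq_card_1)
  then show ?thesis unfolding T_dist_def accept_or_resample_def by (simp only:)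
qed

theorem lemma5:
  fixes U :: "'a set" and D :: "'a pmf" and z :: "'a \<Rightarrow> real"
  assumes "finite U"
    and "set_pmf D \<subseteq> U"
    and "\<And>e. e \<in> U \<Longrightarrow> 0 \<le> z e \<and> z e \<le> 1"
    and "\<And>e. e \<in> U \<Longrightarrow> z e \<le> pmf D e"
    and "S \<subseteq> U"
  shows "pmf (T_dist U D z) S = pmf (zdist U z) S"
proof -
  have "pmf (zdist U z) {e} \<le> pmf D e" for e
  proof (cases "e \<in> U")
    case True
    then show ?thesis using pmf_zdist_singleton_le[OF assms(1) True] assms(3,4)[OF True] by force
  next
    case False
    then have "{e} \<notin> set_pmf (zdist U z)" using set_pmf_zdist by blast
    then show ?thesis by (simp add: set_pmf_iff)
  qed
  then have "T_dist U D z = zdist U z"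
    unfolding T_dist_eq_accept_or_resample by (intro accept_or_resample_eq) (auto intro: injI)
  then show ?thesis by simp
qed

end
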